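(* For every bounded distributive bilattice $\mathbb{B}$ (resp. bounded commutative distributive bilattice with conflation) we have $\mathbb{B}\cong(\mathbb{B}^+)_+$, and for every HBL (resp. HCBL) $\mathbb{H}$ we have $\mathbb{H}\cong(\mathbb{H}_+)^+$.
   Context: A bilattice is $(B,\le_t,\le_k,\neg)$ with $(B,\le_t)$ (operations $\wedge,\vee$) and $(B,\le_k)$ (operations $\otimes,\oplus$) lattices and $\neg$ satisfying: $a\le_tb\Rightarrow\neg b\le_t\neg a$, $a\le_kb\Rightarrow\neg a\le_k\neg b$, $\neg\neg a=a$. It is distributive if $x\circ(y\bullet z)=(x\circ y)\bullet(x\circ z)$ for all $\circ,\bullet\in\{\wedge,\vee,\otimes,\oplus\}$; bounds are $\mathtt{f},\mathtt{t}$ ($\le_t$) and $\bot,\top$ ($\le_k$). A bilattice with conflation additionally has $-$ with $a\le_tb\Rightarrow -a\le_t-b$, $a\le_kb\Rightarrow -b\le_k-a$, $--a=a$; commutative means $\neg-x=-\neg x$. Isomorphisms of bilattices (with conflation) are bijections preserving all these operations. A heterogeneous bilattice (HBL) is a tuple $(\mathbb{L}_1,\mathbb{L}_2,\mathrm{n},\mathrm{p})$ where $\mathbb{L}_i=(L_i,\sqcap_i,\sqcup_i,0_i,1_i)$ are bounded distributive lattices and $\mathrm{n}:\mathbb{L}_1\to\mathbb{L}_2$, $\mathrm{p}:\mathbb{L}_2\to\mathbb{L}_1$ are mutually inverse lattice isomorphisms. An HCBL is defined in the same way with $\mathbb{L}_i$ De Morgan algebras (negations ${\sim}_i$) and $\mathrm{n},\mathrm{p}$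 mutually inverse De Morgan algebra isomorphisms. An isomorphism $(\mathbb{L}_1,\mathbb{L}_2,\mathrm{n},\mathrm{p})\cong(\mathbb{L}_1',\mathbb{L}_2',\mathrm{n}',\mathrm{p}')$ is a pair of algebra isomorphisms $f_i:\mathbb{L}_i\to\mathbb{L}_i'$ with $f_2\circ\mathrm{n}=\mathrm{n}'\circ f_1$ and $f_1\circ\mathrm{p}=\mathrm{p}'\circ f_2$. For a bounded distributive bilattice $\mathbb{B}$, $\mathbb{B}^+$ is the HBL $(\mathbb{L}_1,\mathbb{L}_2,\mathrm{Id},\mathrm{Id})$ with $\mathbb{L}_1=\mathbb{L}_2=(\mathrm{Reg}(\mathbb{B}),\otimes,\oplus,\bot,\top)$, where $\mathrm{Reg}(\mathbb{B})=\{a\in B:a=\neg a\}$ (for a commutative bilattice with conflation, each $\mathbb{L}_i$ is also equipped with ${\sim}_i=-$ restricted to $\mathrm{Reg}(\mathbb{B})$). For an HBL $\mathbb{H}$, $\mathbb{H}_+$ is $L_1\times L_2$ with $\langle a_1,a_2\rangle\otimes\langle b_1,b_2\rangle=\langle a_1\sqcap_1b_1,a_2\sqcap_2b_2\rangle$, $\oplus$ componentwise $\sqcup$, $\langle a_1,a_2\rangle\wedge\langle b_1,b_2\rangle=\langle a_1\sqcap_1b_1,a_2\sqcup_2b_2\rangle$, $\langle a_1,a_2\rangle\vee\langle b_1,b_2\rangle=\langle a_1\sqcup_1b_1,a_2\sqcap_2b_2\rangle$, $\neg\langle a_1,a_2\rangle=\langle\mathrm{p}(a_2),\mathrm{n}(a_1)\rangle$,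 $\mathtt{f}=\langle0_1,1_2\rangle$, $\mathtt{t}=\langle1_1,0_2\rangle$, $\bot=\langle0_1,0_2\rangle$, $\top=\langle1_1,1_2\rangle$; for an HCBL also $-\langle a_1,a_2\rangle=\langle\mathrm{p}({\sim}_2a_2),\mathrm{n}({\sim}_1a_1)\rangle$. *)

theory Defs
  imports Main
begin

definition lattice_ops :: "'a set \<Rightarrow> ('a \<Rightarrow> 'a \<Rightarrow> 'a) \<Rightarrow> ('a \<Rightarrow> 'a \<Rightarrow> 'a) \<Rightarrow> bool" where
  "lattice_ops A m j \<longleftrightarrow>
     (\<forall>x\<in>A. \<forall>y\<in>A. m x y \<in> A \<and> j x y \<in> A \<and> m x y = m y x \<and> j x y = j y x) \<and>
     (\<forall>x\<in>A. \<forall>y\<in>A. \<forall>z\<in>A. m x (m y z) = m (m x y) z \<and> j x (j y z) = j (j x y) z) \<and>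
     (\<forall>x\<in>A. \<forall>y\<in>A. m x (j x y) = x \<and> j x (m x y) = x)"

record 'a dlat =
  lcar :: "'a set"
  lmeet :: "'a \<Rightarrow> 'a \<Rightarrow> 'a"
  ljoin :: "'a \<Rightarrow> 'a \<Rightarrow> 'a"
  lzero :: 'a
  lone :: 'a

record 'a dmalg = "'a dlat" +
  lneg :: "'a \<Rightarrow> 'a"

definition bdlat :: "('a, 'm) dlat_scheme \<Rightarrow> bool" where
  "bdlat L \<longleftrightarrow> lattice_ops (lcar L) (lmeet L) (ljoin L) \<and>
     lzero L \<in> lcar L \<and> lone L \<in> lcar L \<and>
     (\<forall>x\<in>lcar L. lmeet L x (lzero L) = lzero L \<and> ljoin L x (lone L) = lone L) \<and>
     (\<forall>x\<in>lcar L. \<forall>y\<in>lcar L. \<forall>z\<in>lcar L.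
        lmeet L x (ljoin L y z) = ljoin L (lmeet L x y) (lmeet L x z) \<and>
        ljoin L x (lmeet L y z) = lmeet L (ljoin L x y) (ljoin L x z))"

definition dm_algebra :: "('a, 'm) dmalg_scheme \<Rightarrow> bool" where
  "dm_algebra L \<longleftrightarrow> bdlat L \<and>
     (\<forall>x\<in>lcar L. lneg L x \<in> lcar L \<and> lneg L (lneg L x) = x) \<and>
     (\<forall>x\<in>lcar L. \<forall>y\<in>lcar L. lneg L (ljoin L x y) = lmeet L (lneg L x) (lneg L y))"

definition blat_iso :: "('a \<Rightarrow> 'b) \<Rightarrow> ('a, 'm) dlat_scheme \<Rightarrow> ('b, 'n) dlat_scheme \<Rightarrow> bool" where
  "blat_iso f L L' \<longleftrightarrow> bij_betw f (lcar L) (lcar L') \<and>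
     (\<forall>x\<in>lcar L. \<forall>y\<in>lcar L. f (lmeet L x y) = lmeet L' (f x) (f y) \<and>
                               f (ljoin L x y) = ljoin L' (f x) (f y)) \<and>
     f (lzero L) = lzero L' \<and> f (lone L) = lone L'"

definition dm_iso :: "('a \<Rightarrow> 'b) \<Rightarrow> ('a, 'm) dmalg_scheme \<Rightarrow> ('b, 'n) dmalg_scheme \<Rightarrow> bool" where
  "dm_iso f L L' \<longleftrightarrow> blat_iso f L L' \<and> (\<forall>x\<in>lcar L. f (lneg L x) = lneg L' (f x))"

record ('b, 'c) hbl =
  hL1 :: "'b dlat"
  hL2 :: "'c dlat"
  hn :: "'b \<Rightarrow> 'c"
  hp :: "'c \<Rightarrow> 'b"

definition is_hbl :: "('b, 'c) hbl \<Rightarrow> bool" where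
  "is_hbl H \<longleftrightarrow> bdlat (hL1 H) \<and> bdlat (hL2 H) \<and>
     blat_iso (hn H) (hL1 H) (hL2 H) \<and> blat_iso (hp H) (hL2 H) (hL1 H) \<and>
     (\<forall>a\<in>lcar (hL1 H). hp H (hn H a) = a) \<and> (\<forall>b\<in>lcar (hL2 H). hn H (hp H b) = b)"

definition hbl_isomorphic :: "('b, 'c) hbl \<Rightarrow> ('d, 'e) hbl \<Rightarrow> bool" where
  "hbl_isomorphic H H' \<longleftrightarrow> (\<exists>f1 f2.
     blat_iso f1 (hL1 H) (hL1 H') \<and> blat_iso f2 (hL2 H) (hL2 H') \<and>
     (\<forall>a\<in>lcar (hL1 H). f2 (hn H a) = hn H' (f1 a)) \<and>
     (\<forall>b\<in>lcar (hL2 H). f1 (hp H b) = hp H' (f2 b)))"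

record ('b, 'c) hcbl =
  cL1 :: "'b dmalg"
  cL2 :: "'c dmalg"
  cn :: "'b \<Rightarrow> 'c"
  cp :: "'c \<Rightarrow> 'b"

definition is_hcbl :: "('b, 'c) hcbl \<Rightarrow> bool" where
  "is_hcbl H \<longleftrightarrow> dm_algebra (cL1 H) \<and> dm_algebra (cL2 H) \<and>
     dm_iso (cn H) (cL1 H) (cL2 H) \<and> dm_iso (cp H) (cL2 H) (cL1 H) \<and>
     (\<forall>a\<in>lcar (cL1 H). cp H (cn H a) = a) \<and> (\<forall>b\<in>lcar (cL2 H). cn H (cp H b) = b)"

definition hcbl_isomorphic :: "('b, 'c) hcbl \<Rightarrow> ('d, 'e) hcbl \<Rightarrow> bool" where
  "hcbl_isomorphic H H' \<longleftrightarrow> (\<exists>f1 f2.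
     dm_iso f1 (cL1 H) (cL1 H') \<and> dm_iso f2 (cL2 H) (cL2 H') \<and>
     (\<forall>a\<in>lcar (cL1 H). f2 (cn H a) = cn H' (f1 a)) \<and>
     (\<forall>b\<in>lcar (cL2 H). f1 (cp H b) = cp H' (f2 b)))"

record 'a bilat =
  bcar :: "'a set"
  tmeet :: "'a \<Rightarrow> 'a \<Rightarrow> 'a"
  tjoin :: "'a \<Rightarrow> 'a \<Rightarrow> 'a"
  kmeet :: "'a \<Rightarrow> 'a \<Rightarrow> 'a"
  kjoin :: "'a \<Rightarrow> 'a \<Rightarrow> 'a"
  bneg :: "'a \<Rightarrow> 'a"
  bff :: 'a
  btt :: 'a
  bbot :: 'a
  btop :: 'a

record 'a cbilat = "'a bilat" +
  bconf :: "'a \<Rightarrow> 'a"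

definition leq_t :: "('a, 'm) bilat_scheme \<Rightarrow> 'a \<Rightarrow> 'a \<Rightarrow> bool" where
  "leq_t B a b \<longleftrightarrow> tmeet B a b = a"

definition leq_k :: "('a, 'm) bilat_scheme \<Rightarrow> 'a \<Rightarrow> 'a \<Rightarrow> bool" where
  "leq_k B a b \<longleftrightarrow> kmeet B a b = a"

definition bilattice :: "('a, 'm) bilat_scheme \<Rightarrow> bool" where
  "bilattice B \<longleftrightarrow> lattice_ops (bcar B) (tmeet B) (tjoin B) \<and>
     lattice_ops (bcar B) (kmeet B) (kjoin B) \<and>
     (\<forall>a\<in>bcar B. bneg B a \<in> bcar B \<and> bneg B (bneg B a) = a) \<and>
     (\<forall>a\<in>bcar B. \<forall>b\<in>bcar B. leq_t B a b \<longrightarrow> leq_t B (bneg B b) (bneg B a)) \<and>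
     (\<forall>a\<in>bcar B. \<forall>b\<in>bcar B. leq_k B a b \<longrightarrow> leq_k B (bneg B a) (bneg B b))"

definition bounded_bilattice :: "('a, 'm) bilat_scheme \<Rightarrow> bool" where
  "bounded_bilattice B \<longleftrightarrow> bilattice B \<and>
     bff B \<in> bcar B \<and> btt B \<in> bcar B \<and> bbot B \<in> bcar B \<and> btop B \<in> bcar B \<and>
     (\<forall>a\<in>bcar B. leq_t B (bff B) a \<and> leq_t B a (btt B) \<and>
                  leq_k B (bbot B) a \<and> leq_k B a (btop B))"

definition distributive_bilattice :: "('a, 'm) bilat_scheme \<Rightarrow> bool" where
  "distributive_bilattice B \<longleftrightarrow> bilattice B \<and>
     (\<forall>c\<in>{tmeet B, tjoin B, kmeet B, kjoin B}. \<forall>d\<in>{tmeet B, tjoin B, kmeet B, kjoin B}.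
        \<forall>x\<in>bcar B. \<forall>y\<in>bcar B. \<forall>z\<in>bcar B. c x (d y z) = d (c x y) (c x z))"

definition conflation_bilattice :: "('a, 'm) cbilat_scheme \<Rightarrow> bool" where
  "conflation_bilattice B \<longleftrightarrow> bilattice B \<and>
     (\<forall>a\<in>bcar B. bconf B a \<in> bcar B \<and> bconf B (bconf B a) = a) \<and>
     (\<forall>a\<in>bcar B. \<forall>b\<in>bcar B. leq_t B a b \<longrightarrow> leq_t B (bconf B a) (bconf B b)) \<and>
     (\<forall>a\<in>bcar B. \<forall>b\<in>bcar B. leq_k B a b \<longrightarrow> leq_k B (bconf B b) (bconf B a))"

definition commutative_cbilattice :: "('a, 'm) cbilat_scheme \<Rightarrow> bool" where
  "commutative_cbilattice B \<longleftrightarrow> (\<forall>a\<in>bcar B. bneg B (bconf B a) = bconf B (bneg B a))"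

definition bilat_iso_map :: "('a \<Rightarrow> 'b) \<Rightarrow> ('a, 'm) bilat_scheme \<Rightarrow> ('b, 'n) bilat_scheme \<Rightarrow> bool" where
  "bilat_iso_map h B B' \<longleftrightarrow> bij_betw h (bcar B) (bcar B') \<and>
     (\<forall>a\<in>bcar B. \<forall>b\<in>bcar B.
        h (tmeet B a b) = tmeet B' (h a) (h b) \<and> h (tjoin B a b) = tjoin B' (h a) (h b) \<and>
        h (kmeet B a b) = kmeet B' (h a) (h b) \<and> h (kjoin B a b) = kjoin B' (h a) (h b)) \<and>
     (\<forall>a\<in>bcar B. h (bneg B a) = bneg B' (h a)) \<and>
     h (bff B) = bff B' \<and> h (btt B) = btt B' \<and> h (bbot B) = bbot B' \<and> h (btop B) = btop B'"

definition bilat_isomorphic :: "('a, 'm) bilat_scheme \<Rightarrow> ('b, 'n) bilat_scheme \<Rightarrow> bool" where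
  "bilat_isomorphic B B' \<longleftrightarrow> (\<exists>h. bilat_iso_map h B B')"

definition cbilat_isomorphic :: "('a, 'm) cbilat_scheme \<Rightarrow> ('b, 'n) cbilat_scheme \<Rightarrow> bool" where
  "cbilat_isomorphic B B' \<longleftrightarrow>
     (\<exists>h. bilat_iso_map h B B' \<and> (\<forall>a\<in>bcar B. h (bconf B a) = bconf B' (h a)))"

definition Reg :: "('a, 'm) bilat_scheme \<Rightarrow> 'a set" where
  "Reg B = {a \<in> bcar B. a = bneg B a}"

definition B_plus :: "('a, 'm) bilat_scheme \<Rightarrow> ('a, 'a) hbl" where
  "B_plus B = (let L = \<lparr>lcar = Reg B, lmeet = kmeet B, ljoin = kjoin B,
                       lzero = bbot B, lone = btop B\<rparr>
               in \<lparr>hL1 = L, hL2 = L, hn = id, hp = id\<rparr>)"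

definition Bc_plus :: "('a, 'm) cbilat_scheme \<Rightarrow> ('a, 'a) hcbl" where
  "Bc_plus B = (let L = \<lparr>lcar = Reg B, lmeet = kmeet B, ljoin = kjoin B,
                        lzero = bbot B, lone = btop B, lneg = bconf B\<rparr>
                in \<lparr>cL1 = L, cL2 = L, cn = id, cp = id\<rparr>)"

definition H_plus :: "('b, 'c) hbl \<Rightarrow> ('b \<times> 'c) bilat" where
  "H_plus H = \<lparr>bcar = lcar (hL1 H) \<times> lcar (hL2 H),
     tmeet = (\<lambda>x y. (lmeet (hL1 H) (fst x) (fst y), ljoin (hL2 H) (snd x) (snd y))),
     tjoin = (\<lambda>x y. (ljoin (hL1 H) (fst x) (fst y), lmeet (hL2 H) (snd x) (snd y))),
     kmeet = (\<lambda>x y. (lmeet (hL1 H) (fst x) (fst y), lmeet (hL2 H) (snd x) (snd y))),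
     kjoin = (\<lambda>x y. (ljoin (hL1 H) (fst x) (fst y), ljoin (hL2 H) (snd x) (snd y))),
     bneg = (\<lambda>x. (hp H (snd x), hn H (fst x))),
     bff = (lzero (hL1 H), lone (hL2 H)),
     btt = (lone (hL1 H), lzero (hL2 H)),
     bbot = (lzero (hL1 H), lzero (hL2 H)),
     btop = (lone (hL1 H), lone (hL2 H))\<rparr>"

definition Hc_plus :: "('b, 'c) hcbl \<Rightarrow> ('b \<times> 'c) cbilat" where
  "Hc_plus H = \<lparr>bcar = lcar (cL1 H) \<times> lcar (cL2 H),
     tmeet = (\<lambda>x y. (lmeet (cL1 H) (fst x) (fst y), ljoin (cL2 H) (snd x) (snd y))),
     tjoin = (\<lambda>x y. (ljoin (cL1 H) (fst x) (fst y), lmeet (cL2 H) (snd x) (snd y))),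
     kmeet = (\<lambda>x y. (lmeet (cL1 H) (fst x) (fst y), lmeet (cL2 H) (snd x) (snd y))),
     kjoin = (\<lambda>x y. (ljoin (cL1 H) (fst x) (fst y), ljoin (cL2 H) (snd x) (snd y))),
     bneg = (\<lambda>x. (cp H (snd x), cn H (fst x))),
     bff = (lzero (cL1 H), lone (cL2 H)),
     btt = (lone (cL1 H), lzero (cL2 H)),
     bbot = (lzero (cL1 H), lzero (cL2 H)),
     btop = (lone (cL1 H), lone (cL2 H)),
     bconf = (\<lambda>x. (cp H (lneg (cL2 H) (snd x)), cn H (lneg (cL1 H) (fst x))))\<rparr>"

end

(*
  Every element x of a bounded distributive bilattice splits as
  x = (x \<squnion> \<bottom>) \<oplus> (x \<sqinter> \<bottom>) into a part above and a part below \<bottom> in the truth order.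
  Above \<bottom> the truth and knowledge orders coincide, and the knowledge meet of an
  element above \<bottom> with one below \<bottom> is \<bottom>. Hence
  reg_part x = (x \<squnion> \<bottom>) \<oplus> \<not>(x \<squnion> \<bottom>), the unique regular element with the same
  part above \<bottom> as x, is a homomorphism sending both \<sqinter> and \<otimes> to \<otimes> and both \<squnion>
  and \<oplus> to \<oplus>, and a \<mapsto> (reg_part a, reg_part (\<not>a)) is a bijection onto Reg \<times> Reg.
  It commutes with a conflation because reg_part x is also (x \<sqinter> \<top>) \<otimes> (\<not>x \<squnion> \<top>).
  Conversely, the regular elements of H_+ form the graph of n, which is
  isomorphic to L1 via the first and to L2 via the second projection.
*)

theory Submission
  imports Defs
begin

locale lattice_on =
  fixes A :: "'a set" and meet :: "'a \<Rightarrow> 'a \<Rightarrow> 'a" and join :: "'a \<Rightarrow> 'a \<Rightarrow> 'a"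
  assumes lattice_ops: "lattice_ops A meet join"
begin

abbreviation le :: "'a \<Rightarrow> 'a \<Rightarrow> bool" where "le x y \<equiv> meet x y = x"

lemma meet_closed: "x \<in> A \<Longrightarrow> y \<in> A \<Longrightarrow> meet x y \<in> A"
  and join_closed: "x \<in> A \<Longrightarrow> y \<in> A \<Longrightarrow> join x y \<in> A"
  and meet_comm: "x \<in> A \<Longrightarrow> y \<in> A \<Longrightarrow> meet x y = meet y x"
  and join_comm: "x \<in> A \<Longrightarrow> y \<in> A \<Longrightarrow> join x y = join y x"
  and meet_assoc: "x \<in> A \<Longrightarrow> y \<in> A \<Longrightarrow> z \<in> A \<Longrightarrow> meet x (meet y z) = meet (meet x y) z"
  and join_assoc: "x \<in> A \<Longrightarrow> y \<in> A \<Longrightarrow> z \<in> A \<Longrightarrow> join x (join y z) = join (join x y) z"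
  and meet_join_absorb: "x \<in> A \<Longrightarrow> y \<in> A \<Longrightarrow> meet x (join x y) = x"
  and join_meet_absorb: "x \<in> A \<Longrightarrow> y \<in> A \<Longrightarrow> join x (meet x y) = x"
  using lattice_ops unfolding lattice_ops_def by blast+

lemma meet_idem: "x \<in> A \<Longrightarrow> meet x x = x"
  by (metis join_meet_absorb meet_join_absorb meet_closed)

lemma join_idem: "x \<in> A \<Longrightarrow> join x x = x"
  by (metis join_meet_absorb meet_join_absorb join_closed)

lemma le_iff_join: "x \<in> A \<Longrightarrow> y \<in> A \<Longrightarrow> le x y \<longleftrightarrow> join x y = y"
  by (metis join_meet_absorb join_comm meet_join_absorb meet_comm)

lemma le_antisym: "x \<in> A \<Longrightarrow> y \<in> A \<Longrightarrow> le x y \<Longrightarrow> le y x \<Longrightarrow> x = y"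
  by (metis meet_comm)

lemma meet_lower1: "x \<in> A \<Longrightarrow> y \<in> A \<Longrightarrow> le (meet x y) x"
  by (metis meet_assoc meet_comm meet_idem)

lemma meet_lower2: "x \<in> A \<Longrightarrow> y \<in> A \<Longrightarrow> le (meet x y) y"
  by (metis meet_assoc meet_idem)

lemma join_upper1: "x \<in> A \<Longrightarrow> y \<in> A \<Longrightarrow> le x (join x y)"
  by (rule meet_join_absorb)

lemma join_upper2: "x \<in> A \<Longrightarrow> y \<in> A \<Longrightarrow> le y (join x y)"
  by (metis join_comm meet_join_absorb)

lemma meet_greatest: "x \<in> A \<Longrightarrow> y \<in> A \<Longrightarrow> z \<in> A \<Longrightarrow> le z x \<Longrightarrow> le z y \<Longrightarrow> le z (meet x y)"
  by (metis meet_assoc)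

lemma join_least: "x \<in> A \<Longrightarrow> y \<in> A \<Longrightarrow> z \<in> A \<Longrightarrow> le x z \<Longrightarrow> le y z \<Longrightarrow> le (join x y) z"
  by (metis join_assoc join_closed le_iff_join)

lemma join_interchange:
  "a \<in> A \<Longrightarrow> b \<in> A \<Longrightarrow> c \<in> A \<Longrightarrow> d \<in> A \<Longrightarrow> join (join a b) (join c d) = join (join a c) (join b d)"
  using join_assoc[of a b "join c d"] join_assoc[of b c d] join_comm[of b c] join_assoc[of c b d]
    join_assoc[of a c "join b d"] join_closed by simp

lemma dual: "lattice_on A join meet"
  using lattice_ops unfolding lattice_on_def lattice_ops_def by metis

lemma le_dual_iff: "x \<in> A \<Longrightarrow> y \<in> A \<Longrightarrow> join x y = x \<longleftrightarrow> le y x"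
  using le_iff_join join_comm by metis

lemma monotone_involution_meet:
  assumes closed: "\<And>x. x \<in> A \<Longrightarrow> \<phi> x \<in> A" and inv: "\<And>x. x \<in> A \<Longrightarrow> \<phi> (\<phi> x) = x"
    and mono: "\<And>x y. x \<in> A \<Longrightarrow> y \<in> A \<Longrightarrow> le x y \<Longrightarrow> le (\<phi> x) (\<phi> y)"
    and x: "x \<in> A" and y: "y \<in> A"
  shows "\<phi> (meet x y) = meet (\<phi> x) (\<phi> y)"
proof -
  let ?m = "meet (\<phi> x) (\<phi> y)"
  have mA: "meet x y \<in> A" "?m \<in> A" "\<phi> ?m \<in> A" using closed meet_closed x y by auto
  have "le (\<phi> (meet x y)) (\<phi> x)" "le (\<phi> (meet x y)) (\<phi> y)"
    using mono meet_lower1 meet_lower2 mA x y by auto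
  then have le1: "le (\<phi> (meet x y)) ?m"
    using meet_greatest closed mA x y by auto
  have "le (\<phi> ?m) (\<phi> (\<phi> x))" "le (\<phi> ?m) (\<phi> (\<phi> y))"
    using mono meet_lower1 meet_lower2 closed mA x y by auto
  then have "le (\<phi> ?m) (meet x y)"
    using meet_greatest inv mA x y by auto
  then have "le ?m (\<phi> (meet x y))"
    using mono[of "\<phi> ?m" "meet x y"] inv mA by auto
  then show ?thesis using le_antisym le1 closed mA by auto
qed

lemma monotone_involution_hom:
  assumes closed: "\<And>x. x \<in> A \<Longrightarrow> \<phi> x \<in> A" and inv: "\<And>x. x \<in> A \<Longrightarrow> \<phi> (\<phi> x) = x"
    and mono: "\<And>x y. x \<in> A \<Longrightarrow> y \<in> A \<Longrightarrow> le x y \<Longrightarrow> le (\<phi> x) (\<phi> y)"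
    and x: "x \<in> A" and y: "y \<in> A"
  shows "\<phi> (meet x y) = meet (\<phi> x) (\<phi> y)" and "\<phi> (join x y) = join (\<phi> x) (\<phi> y)"
proof -
  show "\<phi> (meet x y) = meet (\<phi> x) (\<phi> y)" by (rule monotone_involution_meet[OF assms])
  interpret d: lattice_on A join meet by (rule dual)
  show "\<phi> (join x y) = join (\<phi> x) (\<phi> y)"
    using d.monotone_involution_meet[OF closed inv _ x y] mono le_dual_iff closed by metis
qed

lemma antitone_involution_meet:
  assumes closed: "\<And>x. x \<in> A \<Longrightarrow> \<phi> x \<in> A" and inv: "\<And>x. x \<in> A \<Longrightarrow> \<phi> (\<phi> x) = x"
    and anti: "\<And>x y. x \<in> A \<Longrightarrow> y \<in> A \<Longrightarrow> le x y \<Longrightarrow> le (\<phi> y) (\<phi> x)"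
    and x: "x \<in> A" and y: "y \<in> A"
  shows "\<phi> (meet x y) = join (\<phi> x) (\<phi> y)"
proof -
  let ?j = "join (\<phi> x) (\<phi> y)"
  have A: "meet x y \<in> A" "?j \<in> A" "\<phi> ?j \<in> A" using closed meet_closed join_closed x y by auto
  have "le (\<phi> x) (\<phi> (meet x y))" "le (\<phi> y) (\<phi> (meet x y))"
    using anti meet_lower1 meet_lower2 A x y by auto
  then have le1: "le ?j (\<phi> (meet x y))"
    using join_least closed A x y by auto
  have "le (\<phi> ?j) (\<phi> (\<phi> x))" "le (\<phi> ?j) (\<phi> (\<phi> y))"
    using anti join_upper1 join_upper2 closed A x y by auto
  then have "le (\<phi> ?j) (meet x y)"
    using meet_greatest inv A x y by auto
  then have "le (\<phi> (meet x y)) ?j"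
    using anti[of "\<phi> ?j" "meet x y"] inv A by auto
  then show ?thesis using le_antisym le1 closed A by auto
qed

lemma antitone_involution_hom:
  assumes closed: "\<And>x. x \<in> A \<Longrightarrow> \<phi> x \<in> A" and inv: "\<And>x. x \<in> A \<Longrightarrow> \<phi> (\<phi> x) = x"
    and anti: "\<And>x y. x \<in> A \<Longrightarrow> y \<in> A \<Longrightarrow> le x y \<Longrightarrow> le (\<phi> y) (\<phi> x)"
    and x: "x \<in> A" and y: "y \<in> A"
  shows "\<phi> (meet x y) = join (\<phi> x) (\<phi> y)" and "\<phi> (join x y) = meet (\<phi> x) (\<phi> y)"
proof -
  show "\<phi> (meet x y) = join (\<phi> x) (\<phi> y)" by (rule antitone_involution_meet[OF assms])
  interpret d: lattice_on A join meet by (rule dual)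
  show "\<phi> (join x y) = meet (\<phi> x) (\<phi> y)"
    using d.antitone_involution_meet[OF closed inv _ x y] anti le_dual_iff closed by metis
qed

lemma monotone_involution_fixes_bounds:
  assumes closed: "\<And>x. x \<in> A \<Longrightarrow> \<phi> x \<in> A" and inv: "\<And>x. x \<in> A \<Longrightarrow> \<phi> (\<phi> x) = x"
    and mono: "\<And>x y. x \<in> A \<Longrightarrow> y \<in> A \<Longrightarrow> le x y \<Longrightarrow> le (\<phi> x) (\<phi> y)"
    and bounds: "z \<in> A" "u \<in> A" "\<And>x. x \<in> A \<Longrightarrow> le z x \<and> le x u"
  shows "\<phi> z = z" and "\<phi> u = u"
  using le_antisym[of "\<phi> z" z] le_antisym[of "\<phi> u" u] mono[of z "\<phi> z"] mono[of "\<phi> u" u]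
    closed inv bounds by auto

lemma antitone_involution_swaps_bounds:
  assumes closed: "\<And>x. x \<in> A \<Longrightarrow> \<phi> x \<in> A" and inv: "\<And>x. x \<in> A \<Longrightarrow> \<phi> (\<phi> x) = x"
    and anti: "\<And>x y. x \<in> A \<Longrightarrow> y \<in> A \<Longrightarrow> le x y \<Longrightarrow> le (\<phi> y) (\<phi> x)"
    and bounds: "z \<in> A" "u \<in> A" "\<And>x. x \<in> A \<Longrightarrow> le z x \<and> le x u"
  shows "\<phi> z = u"
  using le_antisym[of "\<phi> z" u] anti[of z "\<phi> u"] closed inv bounds by auto

end

locale distrib_bilattice =
  fixes B :: "('a, 'm) bilat_scheme"
  assumes bounded: "bounded_bilattice B" and distributive: "distributive_bilattice B"
begin

abbreviation C where "C \<equiv> bcar B"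
abbreviation tm (infixl "\<sqinter>" 70) where "x \<sqinter> y \<equiv> tmeet B x y"
abbreviation tj (infixl "\<squnion>" 65) where "x \<squnion> y \<equiv> tjoin B x y"
abbreviation km (infixl "\<otimes>" 70) where "x \<otimes> y \<equiv> kmeet B x y"
abbreviation kj (infixl "\<oplus>" 65) where "x \<oplus> y \<equiv> kjoin B x y"
abbreviation ng ("\<sim>_" [80] 80) where "\<sim>x \<equiv> bneg B x"
abbreviation le_t (infix "\<le>\<^sub>t" 50) where "x \<le>\<^sub>t y \<equiv> x \<sqinter> y = x"
abbreviation le_k (infix "\<le>\<^sub>k" 50) where "x \<le>\<^sub>k y \<equiv> x \<otimes> y = x"
abbreviation ff ("\<^bold>f") where "\<^bold>f \<equiv> bff B"
abbreviation tt ("\<^bold>t") where "\<^bold>t \<equiv> btt B"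
abbreviation bot ("\<bottom>") where "\<bottom> \<equiv> bbot B"
abbreviation top ("\<top>") where "\<top> \<equiv> btop B"

lemma bilattice: "bilattice B"
  using bounded unfolding bounded_bilattice_def by blast

sublocale t: lattice_on C "tmeet B" "tjoin B"
  using bilattice unfolding bilattice_def lattice_on_def by blast

sublocale k: lattice_on C "kmeet B" "kjoin B"
  using bilattice unfolding bilattice_def lattice_on_def by blast

lemma neg_closed [simp]: "x \<in> C \<Longrightarrow> \<sim>x \<in> C"
  and neg_neg [simp]: "x \<in> C \<Longrightarrow> \<sim>\<sim>x = x"
  and neg_t_antitone: "x \<in> C \<Longrightarrow> y \<in> C \<Longrightarrow> x \<le>\<^sub>t y \<Longrightarrow> \<sim>y \<le>\<^sub>t \<sim>x"
  and neg_k_monotone: "x \<in> C \<Longrightarrow> y \<in> C \<Longrightarrow> x \<le>\<^sub>k y \<Longrightarrow> \<sim>x \<le>\<^sub>k \<sim>y"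
  using bilattice unfolding bilattice_def leq_t_def leq_k_def by blast+

lemma ops_closed [simp]:
  "x \<in> C \<Longrightarrow> y \<in> C \<Longrightarrow> x \<sqinter> y \<in> C" "x \<in> C \<Longrightarrow> y \<in> C \<Longrightarrow> x \<squnion> y \<in> C"
  "x \<in> C \<Longrightarrow> y \<in> C \<Longrightarrow> x \<otimes> y \<in> C" "x \<in> C \<Longrightarrow> y \<in> C \<Longrightarrow> x \<oplus> y \<in> C"
  by (simp_all add: t.meet_closed t.join_closed k.meet_closed k.join_closed)

lemma bounds_closed [simp]: "\<^bold>f \<in> C" "\<^bold>t \<in> C" "\<bottom> \<in> C" "\<top> \<in> C"
  using bounded unfolding bounded_bilattice_def by auto

lemma bounds_le: "x \<in> C \<Longrightarrow> \<^bold>f \<le>\<^sub>t x \<and> x \<le>\<^sub>t \<^bold>t" "x \<in> C \<Longrightarrow> \<bottom> \<le>\<^sub>k x \<and> x \<le>\<^sub>k \<top>"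
  using bounded unfolding bounded_bilattice_def leq_t_def leq_k_def by auto

lemma bound_laws [simp]:
  assumes "x \<in> C"
  shows "\<^bold>f \<sqinter> x = \<^bold>f" "x \<sqinter> \<^bold>f = \<^bold>f" "\<^bold>f \<squnion> x = x" "x \<squnion> \<^bold>f = x"
    "\<^bold>t \<sqinter> x = x" "x \<sqinter> \<^bold>t = x" "\<^bold>t \<squnion> x = \<^bold>t" "x \<squnion> \<^bold>t = \<^bold>t"
    "\<bottom> \<otimes> x = \<bottom>" "x \<otimes> \<bottom> = \<bottom>" "\<bottom> \<oplus> x = x" "x \<oplus> \<bottom> = x"
    "\<top> \<otimes> x = x" "x \<otimes> \<top> = x" "\<top> \<oplus> x = \<top>" "x \<oplus> \<top> = \<top>"
  using assms bounds_le[OF assms] bounds_closed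
    t.le_iff_join[of "\<^bold>f" x] t.le_iff_join[of x "\<^bold>t"] k.le_iff_join[of "\<bottom>" x] k.le_iff_join[of x "\<top>"]
    t.meet_comm[of x] t.join_comm[of x] k.meet_comm[of x] k.join_comm[of x]
  by simp_all

lemma distrib:
  assumes "c \<in> {tmeet B, tjoin B, kmeet B, kjoin B}" "d \<in> {tmeet B, tjoin B, kmeet B, kjoin B}"
    and "x \<in> C" "y \<in> C" "z \<in> C"
  shows "c x (d y z) = d (c x y) (c x z)"
  using distributive assms unfolding distributive_bilattice_def by blast

lemma neg_tmeet: "x \<in> C \<Longrightarrow> y \<in> C \<Longrightarrow> \<sim>(x \<sqinter> y) = \<sim>x \<squnion> \<sim>y"
  and neg_tjoin: "x \<in> C \<Longrightarrow> y \<in> C \<Longrightarrow> \<sim>(x \<squnion> y) = \<sim>x \<sqinter> \<sim>y"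
  by (simp_all add: t.antitone_involution_hom neg_t_antitone)

lemma neg_kmeet: "x \<in> C \<Longrightarrow> y \<in> C \<Longrightarrow> \<sim>(x \<otimes> y) = \<sim>x \<otimes> \<sim>y"
  and neg_kjoin: "x \<in> C \<Longrightarrow> y \<in> C \<Longrightarrow> \<sim>(x \<oplus> y) = \<sim>x \<oplus> \<sim>y"
  by (simp_all add: k.monotone_involution_hom neg_k_monotone)

lemma neg_bot [simp]: "\<sim>\<bottom> = \<bottom>" and neg_top [simp]: "\<sim>\<top> = \<top>"
  using k.monotone_involution_fixes_bounds[of "bneg B" "\<bottom>" "\<top>"] neg_k_monotone bounds_le(2) by auto

lemma neg_ff [simp]: "\<sim>\<^bold>f = \<^bold>t"
  using t.antitone_involution_swaps_bounds[of "bneg B" "\<^bold>f" "\<^bold>t"] neg_t_antitone bounds_le(1) by auto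

lemma neg_tt [simp]: "\<sim>\<^bold>t = \<^bold>f"
  using neg_neg[of "\<^bold>f"] by simp

lemma kmeet_t_mono: "x \<in> C \<Longrightarrow> y \<in> C \<Longrightarrow> z \<in> C \<Longrightarrow> y \<le>\<^sub>t z \<Longrightarrow> x \<otimes> y \<le>\<^sub>t x \<otimes> z"
  using distrib[of "kmeet B" "tmeet B", simplified, of x y z] by metis

lemma tt_kjoin_ff: "\<^bold>t \<oplus> \<^bold>f = \<top>"
proof (rule t.le_antisym)
  show "\<^bold>t \<oplus> \<^bold>f \<le>\<^sub>t \<top>"
    using distrib[of "tjoin B" "kjoin B", simplified, of "\<top>" "\<^bold>t" "\<^bold>f"] t.le_iff_join t.join_comm by simp
  show "\<top> \<le>\<^sub>t \<^bold>t \<oplus> \<^bold>f"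
    using distrib[of "tmeet B" "kjoin B", simplified, of "\<top>" "\<^bold>t" "\<^bold>f"] by simp
qed simp_all

lemma bot_tjoin_top: "\<bottom> \<squnion> \<top> = \<^bold>t"
  using distrib[of "tjoin B" "kjoin B", simplified, of "\<bottom>" "\<^bold>t" "\<^bold>f"] tt_kjoin_ff by simp

lemma kmeet_tt: "x \<in> C \<Longrightarrow> x \<otimes> \<^bold>t = x \<squnion> \<bottom>"
  using distrib[of "kmeet B" "tjoin B", simplified, of x "\<bottom>" "\<top>"] bot_tjoin_top t.join_comm[of x] by simp

lemma tjoin_bot_kmeet: "x \<in> C \<Longrightarrow> y \<in> C \<Longrightarrow> (x \<otimes> y) \<squnion> \<bottom> = (x \<squnion> \<bottom>) \<otimes> (y \<squnion> \<bottom>)"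
  and tjoin_bot_kjoin: "x \<in> C \<Longrightarrow> y \<in> C \<Longrightarrow> (x \<oplus> y) \<squnion> \<bottom> = (x \<squnion> \<bottom>) \<oplus> (y \<squnion> \<bottom>)"
  and tjoin_bot_tmeet: "x \<in> C \<Longrightarrow> y \<in> C \<Longrightarrow> (x \<sqinter> y) \<squnion> \<bottom> = (x \<squnion> \<bottom>) \<sqinter> (y \<squnion> \<bottom>)"
  and tjoin_bot_tjoin: "x \<in> C \<Longrightarrow> y \<in> C \<Longrightarrow> (x \<squnion> y) \<squnion> \<bottom> = (x \<squnion> \<bottom>) \<squnion> (y \<squnion> \<bottom>)"
  and tmeet_bot_kmeet: "x \<in> C \<Longrightarrow> y \<in> C \<Longrightarrow> (x \<otimes> y) \<sqinter> \<bottom> = (x \<sqinter> \<bottom>) \<otimes> (y \<sqinter> \<bottom>)"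
  and tmeet_bot_kjoin: "x \<in> C \<Longrightarrow> y \<in> C \<Longrightarrow> (x \<oplus> y) \<sqinter> \<bottom> = (x \<sqinter> \<bottom>) \<oplus> (y \<sqinter> \<bottom>)"
  using distrib[of "tjoin B" "kmeet B", simplified, of "\<bottom>" x y]
    distrib[of "tjoin B" "kjoin B", simplified, of "\<bottom>" x y]
    distrib[of "tjoin B" "tmeet B", simplified, of "\<bottom>" x y]
    distrib[of "tjoin B" "tjoin B", simplified, of "\<bottom>" x y]
    distrib[of "tmeet B" "kmeet B", simplified, of "\<bottom>" x y]
    distrib[of "tmeet B" "kjoin B", simplified, of "\<bottom>" x y]
    t.join_comm[of _ "\<bottom>"] t.meet_comm[of _ "\<bottom>"] by simp_all

lemma tjoin_bot_idem [simp]: "x \<in> C \<Longrightarrow> (x \<squnion> \<bottom>) \<squnion> \<bottom> = x \<squnion> \<bottom>"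
  and tmeet_bot_idem [simp]: "x \<in> C \<Longrightarrow> (x \<sqinter> \<bottom>) \<sqinter> \<bottom> = x \<sqinter> \<bottom>"
  and tjoin_bot_tmeet_bot [simp]: "x \<in> C \<Longrightarrow> (x \<sqinter> \<bottom>) \<squnion> \<bottom> = \<bottom>"
  and tmeet_bot_tjoin_bot [simp]: "x \<in> C \<Longrightarrow> (x \<squnion> \<bottom>) \<sqinter> \<bottom> = \<bottom>"
  by (simp_all add: t.join_assoc[symmetric] t.meet_assoc[symmetric] t.join_idem t.meet_idem)
    (metis bounds_closed t.join_comm t.join_meet_absorb t.meet_closed t.meet_comm,
     metis bounds_closed t.join_comm t.meet_comm t.meet_join_absorb t.join_closed)

lemma neg_tmeet_bot: "x \<in> C \<Longrightarrow> \<sim>x \<sqinter> \<bottom> = \<sim>(x \<squnion> \<bottom>)"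
  using neg_tjoin[of x "\<bottom>"] by simp

lemma tjoin_bot_kjoin_tmeet_bot: "x \<in> C \<Longrightarrow> (x \<squnion> \<bottom>) \<oplus> (x \<sqinter> \<bottom>) = x"
  using distrib[of "kjoin B" "tmeet B", simplified, of "x \<squnion> \<bottom>" x "\<bottom>"] distrib[of "kjoin B" "tjoin B", simplified, of x x "\<bottom>"]
    k.join_comm[of "x \<squnion> \<bottom>" x] k.join_idem t.join_idem t.meet_join_absorb[of x "\<bottom>"] by simp

lemma pos_kmeet_t_le: "p \<in> C \<Longrightarrow> q \<in> C \<Longrightarrow> p \<squnion> \<bottom> = p \<Longrightarrow> p \<otimes> q \<le>\<^sub>t p"
  using kmeet_t_mono[of p q "\<^bold>t"] kmeet_tt[of p] by simp

lemma pos_t_le_imp_k_le: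
  assumes "p \<in> C" "q \<in> C" "p \<squnion> \<bottom> = p" "p \<le>\<^sub>t q"
  shows "p \<le>\<^sub>k q"
proof (rule t.le_antisym)
  show "p \<otimes> q \<le>\<^sub>t p" using pos_kmeet_t_le assms by simp
  show "p \<le>\<^sub>t p \<otimes> q" using kmeet_t_mono[of p p q] k.meet_idem assms by simp
qed (use assms in simp_all)

lemma pos_k_le_imp_t_le: "p \<in> C \<Longrightarrow> q \<in> C \<Longrightarrow> q \<squnion> \<bottom> = q \<Longrightarrow> p \<le>\<^sub>k q \<Longrightarrow> p \<le>\<^sub>t q"
  using pos_kmeet_t_le[of q p] k.meet_comm[of p q] by simp

lemma pos_tmeet_eq_kmeet:
  assumes p: "p \<in> C" "p \<squnion> \<bottom> = p" and q: "q \<in> C" "q \<squnion> \<bottom> = q"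
  shows "p \<sqinter> q = p \<otimes> q"
proof (rule k.le_antisym)
  have pos: "(p \<sqinter> q) \<squnion> \<bottom> = p \<sqinter> q" "(p \<otimes> q) \<squnion> \<bottom> = p \<otimes> q"
    using tjoin_bot_tmeet tjoin_bot_kmeet p q by simp_all
  show "p \<sqinter> q \<le>\<^sub>k p \<otimes> q"
    using k.meet_greatest pos_t_le_imp_k_le t.meet_lower1 t.meet_lower2 pos p q by simp
  have "p \<otimes> q \<le>\<^sub>t p \<sqinter> q"
    using t.meet_greatest[of p q "p \<otimes> q"] pos_kmeet_t_le[of p q] pos_kmeet_t_le[of q p]
      k.meet_comm[of p q] p q by simp
  then show "p \<otimes> q \<le>\<^sub>k p \<sqinter> q"
    using pos_t_le_imp_k_le pos p q by simp
qed (use p q in simp_all)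

lemma pos_tjoin_eq_kjoin:
  assumes p: "p \<in> C" "p \<squnion> \<bottom> = p" and q: "q \<in> C" "q \<squnion> \<bottom> = q"
  shows "p \<squnion> q = p \<oplus> q"
proof (rule k.le_antisym)
  have pos: "(p \<squnion> q) \<squnion> \<bottom> = p \<squnion> q" "(p \<oplus> q) \<squnion> \<bottom> = p \<oplus> q"
    using tjoin_bot_tjoin tjoin_bot_kjoin p q by simp_all
  show "p \<oplus> q \<le>\<^sub>k p \<squnion> q"
    using k.join_least pos_t_le_imp_k_le t.join_upper1 t.join_upper2 pos p q by simp
  have "p \<squnion> q \<le>\<^sub>t p \<oplus> q"
    using t.join_least pos_k_le_imp_t_le k.join_upper1 k.join_upper2 pos p q by simp
  then show "p \<squnion> q \<le>\<^sub>k p \<oplus> q"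
    using pos_t_le_imp_k_le pos p q by simp
qed (use p q in simp_all)

lemma pos_kmeet_neg:
  assumes p: "p \<in> C" "p \<squnion> \<bottom> = p" and n: "n \<in> C" "n \<sqinter> \<bottom> = n"
  shows "p \<otimes> n = \<bottom>"
proof (rule t.le_antisym)
  show "p \<otimes> n \<le>\<^sub>t \<bottom>" using kmeet_t_mono[of p n "\<bottom>"] p n by simp
  have "\<bottom> \<le>\<^sub>t p" using t.le_iff_join t.join_comm p by simp
  then show "\<bottom> \<le>\<^sub>t p \<otimes> n" using kmeet_t_mono[of n "\<bottom>" p] k.meet_comm p n by simp
qed (use p n in simp_all)

lemma pos_neg_decomp_kmeet:
  assumes p: "p \<in> C" "p \<squnion> \<bottom> = p" and q: "q \<in> C" "q \<squnion> \<bottom> = q"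
    and n: "n \<in> C" "n \<sqinter> \<bottom> = n" and m: "m \<in> C" "m \<sqinter> \<bottom> = m"
  shows "(p \<oplus> n) \<otimes> (q \<oplus> m) = (p \<otimes> q) \<oplus> (n \<otimes> m)"
proof -
  have "(p \<oplus> n) \<otimes> q = p \<otimes> q"
    using distrib[of "kmeet B" "kjoin B", simplified, of q p n] pos_kmeet_neg[OF q n]
      k.meet_comm[of q] p q n by simp
  moreover have "(p \<oplus> n) \<otimes> m = n \<otimes> m"
    using distrib[of "kmeet B" "kjoin B", simplified, of m p n] pos_kmeet_neg[OF p m]
      k.meet_comm[of m] p n m by simp
  ultimately show ?thesis
    using distrib[of "kmeet B" "kjoin B", simplified, of "p \<oplus> n" q m] p q n m by simp
qed

lemma decomp_tjoin_bot: "x \<in> C \<Longrightarrow> y \<in> C \<Longrightarrow> ((x \<squnion> \<bottom>) \<oplus> (y \<sqinter> \<bottom>)) \<squnion> \<bottom> = x \<squnion> \<bottom>"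
  and decomp_tmeet_bot: "x \<in> C \<Longrightarrow> y \<in> C \<Longrightarrow> ((x \<squnion> \<bottom>) \<oplus> (y \<sqinter> \<bottom>)) \<sqinter> \<bottom> = y \<sqinter> \<bottom>"
  by (simp_all add: tjoin_bot_kjoin tmeet_bot_kjoin)

definition reg_part :: "'a \<Rightarrow> 'a" where
  "reg_part x = (x \<squnion> \<bottom>) \<oplus> (\<sim>x \<sqinter> \<bottom>)"

lemma reg_part_closed [simp]: "x \<in> C \<Longrightarrow> reg_part x \<in> C"
  by (simp add: reg_part_def)

lemma reg_part_regular: "x \<in> C \<Longrightarrow> \<sim>(reg_part x) = reg_part x"
  unfolding reg_part_def
  using neg_kjoin[of "x \<squnion> \<bottom>" "\<sim>x \<sqinter> \<bottom>"] neg_tmeet_bot[of x] k.join_comm[of "x \<squnion> \<bottom>"] by simp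

lemma reg_part_cong: "x \<in> C \<Longrightarrow> y \<in> C \<Longrightarrow> x \<squnion> \<bottom> = y \<squnion> \<bottom> \<Longrightarrow> reg_part x = reg_part y"
  unfolding reg_part_def by (simp add: neg_tmeet_bot)

lemma reg_part_unique:
  assumes "x \<in> C" "r \<in> C" "\<sim>r = r" "r \<squnion> \<bottom> = x \<squnion> \<bottom>"
  shows "reg_part x = r"
proof -
  have "reg_part r = r"
    unfolding reg_part_def using tjoin_bot_kjoin_tmeet_bot[of r] assms(2,3) by simp
  then show ?thesis using reg_part_cong assms by metis
qed

lemma reg_part_kmeet: "x \<in> C \<Longrightarrow> y \<in> C \<Longrightarrow> reg_part (x \<otimes> y) = reg_part x \<otimes> reg_part y"
  unfolding reg_part_def
  by (simp add: pos_neg_decomp_kmeet tjoin_bot_kmeet tmeet_bot_kmeet neg_kmeet)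

lemma reg_part_kjoin: "x \<in> C \<Longrightarrow> y \<in> C \<Longrightarrow> reg_part (x \<oplus> y) = reg_part x \<oplus> reg_part y"
  unfolding reg_part_def
  by (simp add: tjoin_bot_kjoin tmeet_bot_kjoin neg_kjoin k.join_interchange)

lemma reg_part_tmeet:
  assumes "x \<in> C" "y \<in> C"
  shows "reg_part (x \<sqinter> y) = reg_part x \<otimes> reg_part y"
proof -
  have "(x \<sqinter> y) \<squnion> \<bottom> = (x \<otimes> y) \<squnion> \<bottom>"
    using tjoin_bot_tmeet[of x y] tjoin_bot_kmeet[of x y] pos_tmeet_eq_kmeet[of "x \<squnion> \<bottom>" "y \<squnion> \<bottom>"] assms by simp
  then show ?thesis using reg_part_cong[of "x \<sqinter> y" "x \<otimes> y"] reg_part_kmeet assms by simp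
qed

lemma reg_part_tjoin:
  assumes "x \<in> C" "y \<in> C"
  shows "reg_part (x \<squnion> y) = reg_part x \<oplus> reg_part y"
proof -
  have "(x \<squnion> y) \<squnion> \<bottom> = (x \<oplus> y) \<squnion> \<bottom>"
    using tjoin_bot_tjoin[of x y] tjoin_bot_kjoin[of x y] pos_tjoin_eq_kjoin[of "x \<squnion> \<bottom>" "y \<squnion> \<bottom>"] assms by simp
  then show ?thesis using reg_part_cong[of "x \<squnion> y" "x \<oplus> y"] reg_part_kjoin assms by simp
qed

lemma reg_part_bounds: "reg_part \<^bold>f = \<bottom>" "reg_part \<^bold>t = \<top>" "reg_part \<bottom> = \<bottom>" "reg_part \<top> = \<top>"
proof -
  show "reg_part \<^bold>f = \<bottom>" "reg_part \<bottom> = \<bottom>"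
    by (simp_all add: reg_part_def t.join_idem t.meet_idem)
  show tt: "reg_part \<^bold>t = \<top>"
    using tt_kjoin_ff t.meet_comm[of "\<^bold>f"] by (simp add: reg_part_def)
  show "reg_part \<top> = \<top>"
    using reg_part_cong[of "\<top>" "\<^bold>t"] bot_tjoin_top t.join_comm[of "\<top>"] tt by simp
qed

lemma reg_part_dual:
  assumes x: "x \<in> C"
  shows "reg_part x = (x \<sqinter> \<top>) \<otimes> (\<sim>x \<squnion> \<top>)"
proof (rule reg_part_unique)
  have top_tjoin_bot: "\<top> \<squnion> \<bottom> = \<^bold>t" using bot_tjoin_top t.join_comm[of "\<top>"] by simp
  have "(x \<sqinter> \<top>) \<squnion> \<bottom> = x \<squnion> \<bottom>" using tjoin_bot_tmeet[of x "\<top>"] top_tjoin_bot x by simp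
  moreover have "(\<sim>x \<squnion> \<top>) \<squnion> \<bottom> = \<^bold>t" using t.join_assoc[of "\<sim>x" "\<top>" "\<bottom>"] top_tjoin_bot x by simp
  ultimately show "(x \<sqinter> \<top>) \<otimes> (\<sim>x \<squnion> \<top>) \<squnion> \<bottom> = x \<squnion> \<bottom>"
    using tjoin_bot_kmeet[of "x \<sqinter> \<top>" "\<sim>x \<squnion> \<top>"] kmeet_tt[of "x \<squnion> \<bottom>"] x by simp
  show "\<sim>((x \<sqinter> \<top>) \<otimes> (\<sim>x \<squnion> \<top>)) = (x \<sqinter> \<top>) \<otimes> (\<sim>x \<squnion> \<top>)"
    using neg_kmeet neg_tmeet neg_tjoin k.meet_comm[of "\<sim>x \<squnion> \<top>"] x by simp
qed (use x in simp_all)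

lemma reg_part_tjoin_bot: "x \<in> C \<Longrightarrow> reg_part x \<squnion> \<bottom> = x \<squnion> \<bottom>"
  and reg_part_tmeet_bot: "x \<in> C \<Longrightarrow> reg_part x \<sqinter> \<bottom> = \<sim>x \<sqinter> \<bottom>"
  unfolding reg_part_def by (simp_all add: decomp_tjoin_bot decomp_tmeet_bot)

lemma bij_reg_parts: "bij_betw (\<lambda>a. (reg_part a, reg_part (\<sim>a))) C (Reg B \<times> Reg B)"
proof (rule bij_betw_byWitness[where f' = "\<lambda>(r, s). (r \<squnion> \<bottom>) \<oplus> (s \<sqinter> \<bottom>)"])
  show "\<forall>a\<in>C. (\<lambda>(r, s). (r \<squnion> \<bottom>) \<oplus> (s \<sqinter> \<bottom>)) (reg_part a, reg_part (\<sim>a)) = a"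
    by (simp add: reg_part_tjoin_bot reg_part_tmeet_bot tjoin_bot_kjoin_tmeet_bot)
  show "\<forall>rs\<in>Reg B \<times> Reg B. (\<lambda>a. (reg_part a, reg_part (\<sim>a))) ((\<lambda>(r, s). (r \<squnion> \<bottom>) \<oplus> (s \<sqinter> \<bottom>)) rs) = rs"
  proof
    fix rs assume "rs \<in> Reg B \<times> Reg B"
    then obtain r s where rs: "rs = (r, s)" "r \<in> C" "s \<in> C" "\<sim>r = r" "\<sim>s = s"
      unfolding Reg_def by auto
    define g where "g = (r \<squnion> \<bottom>) \<oplus> (s \<sqinter> \<bottom>)"
    have g: "g \<in> C" "g \<squnion> \<bottom> = r \<squnion> \<bottom>" "g \<sqinter> \<bottom> = s \<sqinter> \<bottom>"
      unfolding g_def using rs decomp_tjoin_bot decomp_tmeet_bot by simp_all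
    have "\<sim>g \<squnion> \<bottom> = s \<squnion> \<bottom>"
      using neg_tmeet[of g "\<bottom>"] neg_tmeet[of s "\<bottom>"] g rs by simp
    then show "(\<lambda>a. (reg_part a, reg_part (\<sim>a))) ((\<lambda>(r, s). (r \<squnion> \<bottom>) \<oplus> (s \<sqinter> \<bottom>)) rs) = rs"
      using reg_part_unique[of g r] reg_part_unique[of "\<sim>g" s] g rs unfolding g_def by simp
  qed
  show "(\<lambda>a. (reg_part a, reg_part (\<sim>a))) ` C \<subseteq> Reg B \<times> Reg B"
    unfolding Reg_def using reg_part_regular by auto
  show "(\<lambda>(r, s). (r \<squnion> \<bottom>) \<oplus> (s \<sqinter> \<bottom>)) ` (Reg B \<times> Reg B) \<subseteq> C"
    unfolding Reg_def by auto
qed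

lemma bilat_iso_map_H_plus_B_plus: "bilat_iso_map (\<lambda>a. (reg_part a, reg_part (\<sim>a))) B (H_plus (B_plus B))"
  unfolding bilat_iso_map_def
  by (simp add: H_plus_def B_plus_def Let_def bij_reg_parts reg_part_bounds
      reg_part_tmeet reg_part_tjoin reg_part_kmeet reg_part_kjoin neg_tmeet neg_tjoin neg_kmeet neg_kjoin)

end

locale distrib_cbilattice = distrib_bilattice B for B :: "('a, 'm) cbilat_scheme" +
  assumes conflation: "conflation_bilattice B" and commutative: "commutative_cbilattice B"
begin

abbreviation cf ("\<midarrow>_" [80] 80) where "\<midarrow>x \<equiv> bconf B x"

lemma conf_closed [simp]: "x \<in> C \<Longrightarrow> \<midarrow>x \<in> C"
  and conf_conf [simp]: "x \<in> C \<Longrightarrow> \<midarrow>\<midarrow>x = x"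
  and conf_t_monotone: "x \<in> C \<Longrightarrow> y \<in> C \<Longrightarrow> x \<le>\<^sub>t y \<Longrightarrow> \<midarrow>x \<le>\<^sub>t \<midarrow>y"
  and conf_k_antitone: "x \<in> C \<Longrightarrow> y \<in> C \<Longrightarrow> x \<le>\<^sub>k y \<Longrightarrow> \<midarrow>y \<le>\<^sub>k \<midarrow>x"
  using conflation unfolding conflation_bilattice_def leq_t_def leq_k_def by blast+

lemma neg_conf: "x \<in> C \<Longrightarrow> \<sim>\<midarrow>x = \<midarrow>\<sim>x"
  using commutative unfolding commutative_cbilattice_def by blast

lemma conf_tmeet: "x \<in> C \<Longrightarrow> y \<in> C \<Longrightarrow> \<midarrow>(x \<sqinter> y) = \<midarrow>x \<sqinter> \<midarrow>y"
  and conf_tjoin: "x \<in> C \<Longrightarrow> y \<in> C \<Longrightarrow> \<midarrow>(x \<squnion> y) = \<midarrow>x \<squnion> \<midarrow>y"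
  by (simp_all add: t.monotone_involution_hom conf_t_monotone)

lemma conf_kjoin: "x \<in> C \<Longrightarrow> y \<in> C \<Longrightarrow> \<midarrow>(x \<oplus> y) = \<midarrow>x \<otimes> \<midarrow>y"
  by (simp add: k.antitone_involution_hom conf_k_antitone)

lemma conf_bot [simp]: "\<midarrow>\<bottom> = \<top>"
  using k.antitone_involution_swaps_bounds[of "bconf B" "\<bottom>" "\<top>"] conf_k_antitone bounds_le(2) by auto

lemma reg_part_conf:
  assumes a: "a \<in> C"
  shows "reg_part (\<midarrow>a) = \<midarrow>(reg_part (\<sim>a))"
proof -
  have "\<midarrow>(reg_part (\<sim>a)) = \<midarrow>((\<sim>a \<squnion> \<bottom>) \<oplus> (a \<sqinter> \<bottom>))"
    unfolding reg_part_def using a by simp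
  also have "\<dots> = (\<sim>\<midarrow>a \<squnion> \<top>) \<otimes> (\<midarrow>a \<sqinter> \<top>)"
    using conf_kjoin conf_tjoin conf_tmeet neg_conf a by simp
  also have "\<dots> = reg_part (\<midarrow>a)"
    using reg_part_dual[of "\<midarrow>a"] k.meet_comm[of "\<midarrow>a \<sqinter> \<top>"] a by simp
  finally show ?thesis ..
qed

lemma cbilat_isomorphic_Hc_plus_Bc_plus:
  "cbilat_isomorphic B (Hc_plus (Bc_plus B))"
  unfolding cbilat_isomorphic_def
proof (intro exI conjI)
  show "bilat_iso_map (\<lambda>a. (reg_part a, reg_part (\<sim>a))) B (Hc_plus (Bc_plus B))"
    unfolding bilat_iso_map_def
    by (simp add: Hc_plus_def Bc_plus_def Let_def bij_reg_parts reg_part_bounds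
        reg_part_tmeet reg_part_tjoin reg_part_kmeet reg_part_kjoin neg_tmeet neg_tjoin neg_kmeet neg_kjoin)
  show "\<forall>a\<in>C. (reg_part (\<midarrow>a), reg_part (\<sim>\<midarrow>a)) = bconf (Hc_plus (Bc_plus B)) (reg_part a, reg_part (\<sim>a))"
    using neg_conf by (simp add: Hc_plus_def Bc_plus_def Let_def reg_part_conf)
qed

end

lemma blat_iso_graph:
  fixes n :: "'b \<Rightarrow> 'c" and p :: "'c \<Rightarrow> 'b" and M :: "('b \<times> 'c, 'k) dlat_scheme"
  assumes n: "blat_iso n L1 L2" and p: "blat_iso p L2 L1"
    and pn: "\<forall>a\<in>lcar L1. p (n a) = a" and np: "\<forall>b\<in>lcar L2. n (p b) = b"
    and M: "lcar M = {(a, n a) | a. a \<in> lcar L1}"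
      "lmeet M = (\<lambda>x y. (lmeet L1 (fst x) (fst y), lmeet L2 (snd x) (snd y)))"
      "ljoin M = (\<lambda>x y. (ljoin L1 (fst x) (fst y), ljoin L2 (snd x) (snd y)))"
      "lzero M = (lzero L1, lzero L2)" "lone M = (lone L1, lone L2)"
  shows "blat_iso (\<lambda>a. (a, n a)) L1 M" and "blat_iso (\<lambda>b. (p b, b)) L2 M"
proof -
  have n_into: "\<forall>a\<in>lcar L1. n a \<in> lcar L2" and p_into: "\<forall>b\<in>lcar L2. p b \<in> lcar L1"
    using n p unfolding blat_iso_def bij_betw_def by auto
  show "blat_iso (\<lambda>a. (a, n a)) L1 M"
    unfolding blat_iso_def
  proof (intro conjI)
    show "bij_betw (\<lambda>a. (a, n a)) (lcar L1) (lcar M)"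
      by (rule bij_betw_byWitness[where f' = fst]) (auto simp: M)
  qed (use n in \<open>auto simp: M blat_iso_def\<close>)
  show "blat_iso (\<lambda>b. (p b, b)) L2 M"
    unfolding blat_iso_def
  proof (intro conjI)
    show "bij_betw (\<lambda>b. (p b, b)) (lcar L2) (lcar M)"
      by (rule bij_betw_byWitness[where f' = snd]) (use pn np n_into p_into in \<open>force simp: M\<close>)+
  qed (use p in \<open>auto simp: M blat_iso_def\<close>)
qed

lemma swap_fixpoints_graph:
  assumes "\<forall>a\<in>A. n a \<in> B" "\<forall>b\<in>B. p b \<in> A" "\<forall>a\<in>A. p (n a) = a" "\<forall>b\<in>B. n (p b) = b"
  shows "{x \<in> A \<times> B. x = (p (snd x), n (fst x))} = {(a, n a) | a. a \<in> A}"
  using assms by force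

lemma hbl_isomorphic_B_plus_H_plus:
  assumes H: "is_hbl H"
  shows "hbl_isomorphic H (B_plus (H_plus H))"
proof -
  have n: "blat_iso (hn H) (hL1 H) (hL2 H)" and p: "blat_iso (hp H) (hL2 H) (hL1 H)"
    and pn: "\<forall>a\<in>lcar (hL1 H). hp H (hn H a) = a" and np: "\<forall>b\<in>lcar (hL2 H). hn H (hp H b) = b"
    using H unfolding is_hbl_def by auto
  have "Reg (H_plus H) = {(a, hn H a) | a. a \<in> lcar (hL1 H)}"
    using swap_fixpoints_graph[OF _ _ pn np] n p
    unfolding Reg_def H_plus_def blat_iso_def bij_betw_def by auto
  then have "blat_iso (\<lambda>a. (a, hn H a)) (hL1 H) (hL1 (B_plus (H_plus H)))"
    and "blat_iso (\<lambda>b. (hp H b, b)) (hL2 H) (hL2 (B_plus (H_plus H)))"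
    using blat_iso_graph[OF n p pn np, where M = "hL1 (B_plus (H_plus H))"]
    by (simp_all add: B_plus_def H_plus_def Let_def)
  then show ?thesis
    unfolding hbl_isomorphic_def using pn np by (auto simp: B_plus_def Let_def)
qed

lemma hcbl_isomorphic_Bc_plus_Hc_plus:
  assumes H: "is_hcbl H"
  shows "hcbl_isomorphic H (Bc_plus (Hc_plus H))"
proof -
  have n: "dm_iso (cn H) (cL1 H) (cL2 H)" and p: "dm_iso (cp H) (cL2 H) (cL1 H)"
    and pn: "\<forall>a\<in>lcar (cL1 H). cp H (cn H a) = a" and np: "\<forall>b\<in>lcar (cL2 H). cn H (cp H b) = b"
    using H unfolding is_hcbl_def by auto
  have "Reg (Hc_plus H) = {(a, cn H a) | a. a \<in> lcar (cL1 H)}"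
    using swap_fixpoints_graph[OF _ _ pn np] n p
    unfolding Reg_def Hc_plus_def dm_iso_def blat_iso_def bij_betw_def by auto
  then have "blat_iso (\<lambda>a. (a, cn H a)) (cL1 H) (cL1 (Bc_plus (Hc_plus H)))"
    and "blat_iso (\<lambda>b. (cp H b, b)) (cL2 H) (cL2 (Bc_plus (Hc_plus H)))"
    using blat_iso_graph[of "cn H" "cL1 H" "cL2 H" "cp H" "cL1 (Bc_plus (Hc_plus H))"] n p pn np
    by (simp_all add: dm_iso_def Bc_plus_def Hc_plus_def Let_def)
  moreover have "\<forall>a\<in>lcar (cL1 H). cn H (lneg (cL1 H) a) = lneg (cL2 H) (cn H a)"
    and "\<forall>b\<in>lcar (cL2 H). cp H (lneg (cL2 H) b) = lneg (cL1 H) (cp H b)"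
    and "\<forall>a\<in>lcar (cL1 H). cn H a \<in> lcar (cL2 H)" and "\<forall>b\<in>lcar (cL2 H). cp H b \<in> lcar (cL1 H)"
    using n p unfolding dm_iso_def blat_iso_def bij_betw_def by auto
  ultimately show ?thesis
    unfolding hcbl_isomorphic_def dm_iso_def using pn np
    by (auto simp: Bc_plus_def Hc_plus_def Let_def intro!: exI[of _ "\<lambda>a. (a, cn H a)"] exI[of _ "\<lambda>b. (cp H b, b)"])
qed

theorem mainTheorem9:
  shows "(\<forall>B :: 'a bilat. bounded_bilattice B \<and> distributive_bilattice B \<longrightarrow>
            bilat_isomorphic B (H_plus (B_plus B))) \<and>
         (\<forall>B :: 'a cbilat. bounded_bilattice B \<and> distributive_bilattice B \<and>
            conflation_bilattice B \<and> commutative_cbilattice B \<longrightarrow>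
            cbilat_isomorphic B (Hc_plus (Bc_plus B))) \<and>
         (\<forall>H :: ('b, 'c) hbl. is_hbl H \<longrightarrow> hbl_isomorphic H (B_plus (H_plus H))) \<and>
         (\<forall>H :: ('b, 'c) hcbl. is_hcbl H \<longrightarrow> hcbl_isomorphic H (Bc_plus (Hc_plus H)))"
proof (intro conjI allI impI)
  fix B :: "'a bilat"
  assume "bounded_bilattice B \<and> distributive_bilattice B"
  then interpret distrib_bilattice B by unfold_locales auto
  show "bilat_isomorphic B (H_plus (B_plus B))"
    unfolding bilat_isomorphic_def using bilat_iso_map_H_plus_B_plus by blast
next
  fix B :: "'a cbilat"
  assume "bounded_bilattice B \<and> distributive_bilattice B \<and>
    conflation_bilattice B \<and> commutative_cbilattice B"
  then interpret distrib_cbilattice B by unfold_locales auto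
  show "cbilat_isomorphic B (Hc_plus (Bc_plus B))" by (rule cbilat_isomorphic_Hc_plus_Bc_plus)
next
  fix H :: "('b, 'c) hbl"
  assume "is_hbl H"
  then show "hbl_isomorphic H (B_plus (H_plus H))" by (rule hbl_isomorphic_B_plus_H_plus)
next
  fix H :: "('b, 'c) hcbl"
  assume "is_hcbl H"
  then show "hcbl_isomorphic H (Bc_plus (Hc_plus H))" by (rule hcbl_isomorphic_Bc_plus_Hc_plus)
qed

end
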